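(* Let $M$ be a globally hyperbolic developable conformally flat spacetime of dimension $n\ge3$ with developing map $D:M\to\widetilde{Ein}_{1,n-1}$. Let $U$ be a causally convex open subset of $M$ and let $\Sigma$ be a Cauchy hypersurface of $U$ such that $D(\Sigma)$ is achronal in $\widetilde{Ein}_{1,n-1}$. If the restriction of $D$ to $\Sigma$ is injective, then the restriction of $D$ to $U$ is injective.
   Context: $\widetilde{Ein}_{1,n-1}$ denotes the universal cover of the Einstein universe, conformally identified with $\mathbb{S}^{n-1}\times\mathbb{R}$ with the conformal class of $d\sigma^2-dt^2$, time-oriented by $\partial_t$. A conformally flat spacetime $M$ is developable if it admits a developing map: a conformal, time-orientation preserving local diffeomorphism $D:M\to\widetilde{Ein}_{1,n-1}$. A subset $U$ of a spacetime is causally convex if every causal curve joining two points of $U$ is contained in $U$. *)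

theory Defs
  imports "HOL-Analysis.Analysis"
begin

text \<open>Universal cover of the Einstein universe: the unit sphere of the
  Euclidean space 'a (of dimension n) times the real line, with time coordinate
  the second component. The conformal class of dsigma^2 - dt^2 is encoded
  through its causal structure: spherical (round) distance versus time.\<close>

definition ein_set :: "('a::euclidean_space \<times> real) set" where
  "ein_set = {(x, t). norm x = 1}"

definition ein_top :: "('a::euclidean_space \<times> real) topology" where
  "ein_top = subtopology euclidean ein_set"

definition sdist :: "'a::euclidean_space \<Rightarrow> 'a \<Rightarrow> real" where
  "sdist x y = arccos (x \<bullet> y)"

definition local_homeo :: "'m topology \<Rightarrow> 'b topology \<Rightarrow> ('m \<Rightarrow> 'b) \<Rightarrow> bool" where
  "local_homeo X Y f \<longleftrightarrow>
     (\<forall>p \<in> topspace X. \<exists>V. openin X V \<and> p \<in> V \<and> openin Y (f ` V) \<and>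
        homeomorphic_map (subtopology X V) (subtopology Y (f ` V)) f)"

text \<open>A developable conformally flat spacetime, presented through its developing
  map: the conformal structure and time orientation of M are the pull-backs by D.\<close>
definition developed_spacetime :: "'m topology \<Rightarrow> ('m \<Rightarrow> 'a::euclidean_space \<times> real) \<Rightarrow> bool" where
  "developed_spacetime X D \<longleftrightarrow> topspace X \<noteq> {} \<and> Hausdorff_space X \<and> second_countable X \<and>
     connected_space X \<and> local_homeo X ein_top D"

definition param_interval :: "real set \<Rightarrow> bool" where
  "param_interval I \<longleftrightarrow> is_interval I \<and> (\<exists>a\<in>I. \<exists>b\<in>I. a < b)"

definition future_causal_curve ::
  "'m topology \<Rightarrow> ('m \<Rightarrow> 'a::euclidean_space \<times> real) \<Rightarrow> (real \<Rightarrow> 'm) \<Rightarrow> real set \<Rightarrow> bool" where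
  "future_causal_curve X D \<gamma> I \<longleftrightarrow> param_interval I \<and>
     continuous_map (subtopology euclideanreal I) X \<gamma> \<and>
     (\<forall>s1\<in>I. \<forall>s2\<in>I. s1 < s2 \<longrightarrow>
        snd (D (\<gamma> s1)) < snd (D (\<gamma> s2)) \<and>
        sdist (fst (D (\<gamma> s1))) (fst (D (\<gamma> s2))) \<le> snd (D (\<gamma> s2)) - snd (D (\<gamma> s1)))"

definition past_causal_curve ::
  "'m topology \<Rightarrow> ('m \<Rightarrow> 'a::euclidean_space \<times> real) \<Rightarrow> (real \<Rightarrow> 'm) \<Rightarrow> real set \<Rightarrow> bool" where
  "past_causal_curve X D \<gamma> I \<longleftrightarrow> param_interval I \<and>
     continuous_map (subtopology euclideanreal I) X \<gamma> \<and>
     (\<forall>s1\<in>I. \<forall>s2\<in>I. s1 < s2 \<longrightarrow>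
        snd (D (\<gamma> s2)) < snd (D (\<gamma> s1)) \<and>
        sdist (fst (D (\<gamma> s1))) (fst (D (\<gamma> s2))) \<le> snd (D (\<gamma> s1)) - snd (D (\<gamma> s2)))"

definition future_timelike_curve ::
  "'m topology \<Rightarrow> ('m \<Rightarrow> 'a::euclidean_space \<times> real) \<Rightarrow> (real \<Rightarrow> 'm) \<Rightarrow> real set \<Rightarrow> bool" where
  "future_timelike_curve X D \<gamma> I \<longleftrightarrow> param_interval I \<and>
     continuous_map (subtopology euclideanreal I) X \<gamma> \<and>
     (\<forall>s1\<in>I. \<forall>s2\<in>I. s1 < s2 \<longrightarrow>
        sdist (fst (D (\<gamma> s1))) (fst (D (\<gamma> s2))) < snd (D (\<gamma> s2)) - snd (D (\<gamma> s1)))"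

definition past_timelike_curve ::
  "'m topology \<Rightarrow> ('m \<Rightarrow> 'a::euclidean_space \<times> real) \<Rightarrow> (real \<Rightarrow> 'm) \<Rightarrow> real set \<Rightarrow> bool" where
  "past_timelike_curve X D \<gamma> I \<longleftrightarrow> param_interval I \<and>
     continuous_map (subtopology euclideanreal I) X \<gamma> \<and>
     (\<forall>s1\<in>I. \<forall>s2\<in>I. s1 < s2 \<longrightarrow>
        sdist (fst (D (\<gamma> s1))) (fst (D (\<gamma> s2))) < snd (D (\<gamma> s1)) - snd (D (\<gamma> s2)))"

definition causal_curve where
  "causal_curve X D \<gamma> I \<longleftrightarrow> future_causal_curve X D \<gamma> I \<or> past_causal_curve X D \<gamma> I"

definition timelike_curve where
  "timelike_curve X D \<gamma> I \<longleftrightarrow> future_timelike_curve X D \<gamma> I \<or> past_timelike_curve X D \<gamma> I"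

definition upper_end :: "real set \<Rightarrow> real filter" where
  "upper_end I = (if bdd_above I then at_left (Sup I) else at_top)"

definition lower_end :: "real set \<Rightarrow> real filter" where
  "lower_end I = (if bdd_below I then at_right (Inf I) else at_bot)"

definition inextendible :: "'m topology \<Rightarrow> (real \<Rightarrow> 'm) \<Rightarrow> real set \<Rightarrow> bool" where
  "inextendible X \<gamma> I \<longleftrightarrow>
     \<not> (\<exists>p. limitin X \<gamma> p (upper_end I)) \<and> \<not> (\<exists>p. limitin X \<gamma> p (lower_end I))"

definition cauchy_hypersurface ::
  "'m topology \<Rightarrow> ('m \<Rightarrow> 'a::euclidean_space \<times> real) \<Rightarrow> 'm set \<Rightarrow> bool" where
  "cauchy_hypersurface X D S \<longleftrightarrow> S \<subseteq> topspace X \<and>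
     (\<forall>\<gamma> I. timelike_curve X D \<gamma> I \<and> inextendible X \<gamma> I \<longrightarrow> (\<exists>!s. s \<in> I \<and> \<gamma> s \<in> S))"

definition causal_le where
  "causal_le X D p q \<longleftrightarrow> p = q \<or>
     (\<exists>\<gamma> a b. a < b \<and> future_causal_curve X D \<gamma> {a..b} \<and> \<gamma> a = p \<and> \<gamma> b = q)"

definition chrono_less where
  "chrono_less X D p q \<longleftrightarrow>
     (\<exists>\<gamma> a b. a < b \<and> future_timelike_curve X D \<gamma> {a..b} \<and> \<gamma> a = p \<and> \<gamma> b = q)"

definition globally_hyperbolic ::
  "'m topology \<Rightarrow> ('m \<Rightarrow> 'a::euclidean_space \<times> real) \<Rightarrow> bool" where
  "globally_hyperbolic X D \<longleftrightarrow>
     \<not> (\<exists>\<gamma> a b. a < b \<and> future_causal_curve X D \<gamma> {a..b} \<and> \<gamma> a = \<gamma> b) \<and>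
     (\<forall>p\<in>topspace X. \<forall>q\<in>topspace X.
        compactin X {r \<in> topspace X. causal_le X D p r \<and> causal_le X D r q})"

definition causally_convex ::
  "'m topology \<Rightarrow> ('m \<Rightarrow> 'a::euclidean_space \<times> real) \<Rightarrow> 'm set \<Rightarrow> bool" where
  "causally_convex X D U \<longleftrightarrow>
     (\<forall>\<gamma> a b. a < b \<and> causal_curve X D \<gamma> {a..b} \<and> \<gamma> a \<in> U \<and> \<gamma> b \<in> U \<longrightarrow> \<gamma> ` {a..b} \<subseteq> U)"

definition ein_achronal :: "('a::euclidean_space \<times> real) set \<Rightarrow> bool" where
  "ein_achronal A \<longleftrightarrow> A \<subseteq> ein_set \<and>
     (\<forall>p\<in>A. \<forall>q\<in>A. \<not> chrono_less (ein_top :: ('a \<times> real) topology) id p q)"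

end

theory Submission
  imports Defs
begin

text \<open>Let p, q \<in> U with D p = D q = (x, t). The vertical line s \<mapsto> (x, s) of the Einstein
  universe is timelike; lift it through the local homeomorphism D, inside U, to maximal lifts
  through p and through q. A maximal lift is inextendible: at a finite end its limit point would
  carry a further local lift, and at an infinite end the time coordinate would have to converge.
  Hence both lifts meet the Cauchy hypersurface S, at times sp and sq. Achronality of D(S) forces
  sp = sq, injectivity of D on S makes the two lifts meet, and uniqueness of lifts through a local
  homeomorphism into a Hausdorff space gives p = q.\<close>

lemma local_homeo_refine:
  assumes "local_homeo X Y f" "openin X W" "p \<in> W"
  obtains V g where "openin X V" "p \<in> V" "V \<subseteq> W" "openin Y (f ` V)"
    "homeomorphic_maps (subtopology X V) (subtopology Y (f ` V)) f g"
proof -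
  have "p \<in> topspace X" using assms openin_subset by blast
  then obtain V0 where V0: "openin X V0" "p \<in> V0" "openin Y (f ` V0)"
    "homeomorphic_map (subtopology X V0) (subtopology Y (f ` V0)) f"
    using assms(1) unfolding local_homeo_def by blast
  define V where "V = V0 \<inter> W"
  have V: "openin X V" using V0(1) assms(2) V_def by auto
  have "f ` (topspace (subtopology X V0) \<inter> V) = topspace (subtopology Y (f ` V0)) \<inter> f ` V"
    using openin_subset[OF V] openin_subset[OF V0(3)] V_def by auto
  from homeomorphic_map_subtopologies[OF V0(4) this]
  have hom: "homeomorphic_map (subtopology X V) (subtopology Y (f ` V)) f"
    by (simp add: subtopology_subtopology V_def Int_absorb1 image_mono Int_assoc)
  have "openin (subtopology X V0) V"
    using V V_def by (simp add: openin_subset_topspace_eq openin_open_subtopology V0(1))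
  then have "openin (subtopology Y (f ` V0)) (f ` V)"
    using homeomorphic_imp_open_map[OF V0(4)] unfolding open_map_def by blast
  then have "openin Y (f ` V)" using openin_trans_full V0(3) by blast
  then show ?thesis using that V hom homeomorphic_map_maps V_def assms(3) V0(2) by blast
qed

lemma local_homeo_imp_continuous_map:
  assumes "local_homeo X Y f"
  shows "continuous_map X Y f"
proof (rule pasting_lemma[where I = "{V. openin X V \<and> continuous_map (subtopology X V) Y f}"
      and T = id and f = "\<lambda>_. f"])
  fix p assume "p \<in> topspace X"
  then obtain V where V: "openin X V" "p \<in> V"
    "homeomorphic_map (subtopology X V) (subtopology Y (f ` V)) f"
    using assms unfolding local_homeo_def by blast
  then have "continuous_map (subtopology X V) Y f"
    using homeomorphic_imp_continuous_map continuous_map_in_subtopology by metis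
  then show "\<exists>V. V \<in> {V. openin X V \<and> continuous_map (subtopology X V) Y f} \<and> p \<in> id V \<and> f p = f p"
    using V by auto
qed auto

lemma local_homeo_subtopology:
  assumes "local_homeo X Y f" "openin X U"
  shows "local_homeo (subtopology X U) Y f"
  unfolding local_homeo_def
proof
  fix p assume "p \<in> topspace (subtopology X U)"
  then obtain V g where V: "openin X V" "p \<in> V" "V \<subseteq> U" "openin Y (f ` V)"
    "homeomorphic_maps (subtopology X V) (subtopology Y (f ` V)) f g"
    using local_homeo_refine[OF assms] by auto
  have "openin (subtopology X U) V"
    using V(1,3) by (auto simp: openin_subtopology intro!: exI[of _ V])
  moreover have "subtopology (subtopology X U) V = subtopology X V"
    using V(3) by (simp add: subtopology_subtopology Int_absorb1)
  ultimately show "\<exists>V. openin (subtopology X U) V \<and> p \<in> V \<and> openin Y (f ` V) \<and>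
      homeomorphic_map (subtopology (subtopology X U) V) (subtopology Y (f ` V)) f"
    using V homeomorphic_map_maps by metis
qed

text \<open>The set where two lifts agree is closed because X is Hausdorff, and open because f is
  injective near each of its points.\<close>
lemma local_homeo_lifts_eq:
  assumes "local_homeo X Y f" "Hausdorff_space X" "connected_space T"
    and "continuous_map T X g1" "continuous_map T X g2"
    and "\<And>s. s \<in> topspace T \<Longrightarrow> f (g1 s) = f (g2 s)"
    and "s0 \<in> topspace T" "g1 s0 = g2 s0" "s \<in> topspace T"
  shows "g1 s = g2 s"
proof -
  define A where "A = {s \<in> topspace T. g1 s = g2 s}"
  have "closedin T A"
    unfolding A_def using closedin_continuous_maps_eq assms(2,4,5) by blast
  moreover have "openin T A"
  proof (subst openin_subopen, intro ballI)
    fix s assume "s \<in> A"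
    then have s: "s \<in> topspace T" "g1 s = g2 s" by (auto simp: A_def)
    have "g1 s \<in> topspace X" using assms(4) s(1) by (auto simp: continuous_map_def)
    then obtain V where V: "openin X V" "g1 s \<in> V"
      "homeomorphic_map (subtopology X V) (subtopology Y (f ` V)) f"
      using assms(1) unfolding local_homeo_def by blast
    then have inj: "inj_on f V"
      by (metis homeomorphic_imp_injective_map openin_subset topspace_subtopology_subset)
    define Z where "Z = {x \<in> topspace T. g1 x \<in> V} \<inter> {x \<in> topspace T. g2 x \<in> V}"
    have "openin T Z"
      unfolding Z_def using openin_continuous_map_preimage V(1) assms(4,5) by blast
    moreover have "Z \<subseteq> A" using inj assms(6) by (auto simp: Z_def A_def inj_on_def)
    ultimately show "\<exists>Z. openin T Z \<and> s \<in> Z \<and> Z \<subseteq> A" using s V(2) by (auto simp: Z_def)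
  qed
  moreover have "s0 \<in> A" using assms(7,8) by (simp add: A_def)
  ultimately have "A = topspace T" using assms(3) connected_space_clopen_in by blast
  then show ?thesis using assms(9) by (auto simp: A_def)
qed

lemma topspace_ein_top [simp]: "topspace ein_top = ein_set"
  by (simp add: ein_top_def)

lemma continuous_map_vertical_line:
  fixes x :: "'a::euclidean_space"
  assumes "norm x = 1"
  shows "continuous_map (top_of_set I) ein_top (\<lambda>s. (x, s))"
proof -
  have "continuous_on I (\<lambda>s. (x, s))" by (intro continuous_intros)
  then show ?thesis
    using assms by (auto simp: ein_top_def ein_set_def continuous_map_in_subtopology)
qed

lemma sdist_self: "norm x = 1 \<Longrightarrow> sdist x x = 0"
  by (simp add: sdist_def power2_norm_eq_inner[symmetric])

lemma param_interval_open:
  assumes "open J" "is_interval J" "t \<in> J"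
  shows "param_interval J"
proof -
  obtain d where "d > 0" "ball t d \<subseteq> J" using assms(1,3) open_contains_ball by blast
  then have "t + d/2 \<in> J" by (auto simp: dist_real_def)
  then show ?thesis
    unfolding param_interval_def using assms(2,3) \<open>d > 0\<close>
    by (intro conjI bexI[of _ t] bexI[of _ "t + d/2"]) auto
qed

lemma chrono_less_vertical:
  fixes x :: "'a::euclidean_space"
  assumes "norm x = 1" "a < b"
  shows "chrono_less (ein_top :: ('a \<times> real) topology) id (x, a) (x, b)"
proof -
  have "param_interval {a..b}"
    unfolding param_interval_def using assms(2)
    by (intro conjI is_interval_cc bexI[of _ a] bexI[of _ b]) auto
  then have "future_timelike_curve ein_top id (\<lambda>s. (x, s)) {a..b}"
    unfolding future_timelike_curve_def
    by (simp add: continuous_map_vertical_line[OF assms(1)] sdist_self[OF assms(1)])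
  then show ?thesis unfolding chrono_less_def using assms(2) by blast
qed

lemma ein_achronal_vertical_unique:
  fixes x :: "'a::euclidean_space"
  assumes "ein_achronal A" "(x, s1) \<in> A" "(x, s2) \<in> A"
  shows "s1 = s2"
proof (rule ccontr)
  assume "s1 \<noteq> s2"
  then consider "s1 < s2" | "s2 < s1" by linarith
  moreover have "norm x = 1" using assms unfolding ein_achronal_def ein_set_def by blast
  moreover have "\<not> chrono_less ein_top id (x, s1) (x, s2)" "\<not> chrono_less ein_top id (x, s2) (x, s1)"
    using assms unfolding ein_achronal_def by blast+
  ultimately show False using chrono_less_vertical by metis
qed

lemma less_cSup_open:
  fixes L :: "real set"
  assumes "open L" "bdd_above L" "l \<in> L"
  shows "l < Sup L"
proof -
  obtain d where "d > 0" "ball l d \<subseteq> L" using assms(1,3) open_contains_ball by blast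
  then have "l + d/2 \<in> L" by (auto simp: dist_real_def)
  then have "l + d/2 \<le> Sup L" using assms(2) by (rule cSup_upper)
  then show ?thesis using \<open>d > 0\<close> by linarith
qed

lemma cInf_less_open:
  fixes L :: "real set"
  assumes "open L" "bdd_below L" "l \<in> L"
  shows "Inf L < l"
proof -
  obtain d where "d > 0" "ball l d \<subseteq> L" using assms(1,3) open_contains_ball by blast
  then have "l - d/2 \<in> L" by (auto simp: dist_real_def)
  then have "Inf L \<le> l - d/2" using assms(2) by (rule cInf_lower)
  then show ?thesis using \<open>d > 0\<close> by linarith
qed

lemma upper_end_open_interval:
  fixes L :: "real set"
  assumes "open L" "is_interval L" "t \<in> L"
  shows "upper_end L \<noteq> bot" "eventually (\<lambda>s. s \<in> L) (upper_end L)"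
    and "\<forall>b\<in>L. \<not> ((\<lambda>s. s) \<longlongrightarrow> b) (upper_end L)"
proof -
  have "upper_end L \<noteq> bot \<and> eventually (\<lambda>s. s \<in> L) (upper_end L) \<and>
    (\<forall>b\<in>L. \<not> ((\<lambda>s. s) \<longlongrightarrow> b) (upper_end L))"
  proof (cases "bdd_above L")
    case True
    have "eventually (\<lambda>s. s \<in> L) (at_left (Sup L))"
      using eventually_at_left_real[OF less_cSup_open[OF assms(1) True assms(3)]]
    proof eventually_elim
      case (elim s)
      then obtain l where "l \<in> L" "s < l" using less_cSupD[of L s] assms(3) by auto
      then show ?case using elim assms(2,3) mem_is_interval_1_I[of L t l s] by auto
    qed
    moreover have "\<not> ((\<lambda>s. s) \<longlongrightarrow> b) (at_left (Sup L))" if "b \<in> L" for b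
      using tendsto_unique[OF trivial_limit_at_left_real _ tendsto_ident_at]
        less_cSup_open[OF assms(1) True that]
      by force
    ultimately show ?thesis using True by (simp add: upper_end_def)
  next
    case False
    have "eventually (\<lambda>s. s \<in> L) at_top"
      using eventually_ge_at_top[of t]
    proof eventually_elim
      case (elim s)
      obtain l where "l \<in> L" "s < l" using False by (auto simp: bdd_above_def not_le)
      then show ?case using elim assms(2,3) mem_is_interval_1_I[of L t l s] by auto
    qed
    moreover have "\<not> ((\<lambda>s. s) \<longlongrightarrow> b) at_top" for b :: real
      using not_tendsto_and_filterlim_at_infinity[OF trivial_limit_at_top_linorder]
        filterlim_mono[OF filterlim_ident at_top_le_at_infinity order_refl] by blast
    ultimately show ?thesis using False by (simp add: upper_end_def)
  qed
  then show "upper_end L \<noteq> bot" "eventually (\<lambda>s. s \<in> L) (upper_end L)"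
    and "\<forall>b\<in>L. \<not> ((\<lambda>s. s) \<longlongrightarrow> b) (upper_end L)" by blast+
qed

lemma lower_end_open_interval:
  fixes L :: "real set"
  assumes "open L" "is_interval L" "t \<in> L"
  shows "lower_end L \<noteq> bot" "eventually (\<lambda>s. s \<in> L) (lower_end L)"
    and "\<forall>b\<in>L. \<not> ((\<lambda>s. s) \<longlongrightarrow> b) (lower_end L)"
proof -
  have "lower_end L \<noteq> bot \<and> eventually (\<lambda>s. s \<in> L) (lower_end L) \<and>
    (\<forall>b\<in>L. \<not> ((\<lambda>s. s) \<longlongrightarrow> b) (lower_end L))"
  proof (cases "bdd_below L")
    case True
    have "eventually (\<lambda>s. s \<in> L) (at_right (Inf L))"
      using eventually_at_right_real[OF cInf_less_open[OF assms(1) True assms(3)]]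
    proof eventually_elim
      case (elim s)
      then obtain l where "l \<in> L" "l < s" using cInf_lessD[of L s] assms(3) by auto
      then show ?case using elim assms(2,3) mem_is_interval_1_I[of L l t s] by auto
    qed
    moreover have "\<not> ((\<lambda>s. s) \<longlongrightarrow> b) (at_right (Inf L))" if "b \<in> L" for b
      using tendsto_unique[OF trivial_limit_at_right_real _ tendsto_ident_at]
        cInf_less_open[OF assms(1) True that]
      by force
    ultimately show ?thesis using True by (simp add: lower_end_def)
  next
    case False
    have "eventually (\<lambda>s. s \<in> L) at_bot"
      using eventually_le_at_bot[of t]
    proof eventually_elim
      case (elim s)
      obtain l where "l \<in> L" "l < s" using False by (auto simp: bdd_below_def not_le)
      then show ?case using elim assms(2,3) mem_is_interval_1_I[of L l t s] by auto
    qed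
    moreover have "\<not> ((\<lambda>s. s) \<longlongrightarrow> b) at_bot" for b :: real
      using not_tendsto_and_filterlim_at_infinity[OF trivial_limit_at_bot_linorder]
        filterlim_mono[OF filterlim_ident at_bot_le_at_infinity order_refl] by blast
    ultimately show ?thesis using False by (simp add: lower_end_def)
  qed
  then show "lower_end L \<noteq> bot" "eventually (\<lambda>s. s \<in> L) (lower_end L)"
    and "\<forall>b\<in>L. \<not> ((\<lambda>s. s) \<longlongrightarrow> b) (lower_end L)" by blast+
qed

definition vertical_lift ::
  "'m topology \<Rightarrow> ('m \<Rightarrow> 'a::euclidean_space \<times> real) \<Rightarrow> 'a \<Rightarrow> real set \<Rightarrow> (real \<Rightarrow> 'm) \<Rightarrow> bool"
  where "vertical_lift X D x J \<gamma> \<longleftrightarrow> open J \<and> is_interval J \<and>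
    continuous_map (top_of_set J) X \<gamma> \<and> (\<forall>s\<in>J. D (\<gamma> s) = (x, s))"

definition maximal_vertical_lift ::
  "'m topology \<Rightarrow> ('m \<Rightarrow> 'a::euclidean_space \<times> real) \<Rightarrow> 'a \<Rightarrow> real set \<Rightarrow> (real \<Rightarrow> 'm) \<Rightarrow> bool"
  where "maximal_vertical_lift X D x L \<Gamma> \<longleftrightarrow> vertical_lift X D x L \<Gamma> \<and>
    (\<forall>J \<gamma>. vertical_lift X D x J \<gamma> \<and> (\<exists>s\<in>J \<inter> L. \<gamma> s = \<Gamma> s) \<longrightarrow> J \<subseteq> L)"

lemma vertical_lifts_eq:
  assumes "local_homeo X Y D" "Hausdorff_space X"
    and "vertical_lift X D x J1 \<gamma>1" "vertical_lift X D x J2 \<gamma>2"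
    and "s0 \<in> J1 \<inter> J2" "\<gamma>1 s0 = \<gamma>2 s0" "s \<in> J1 \<inter> J2"
  shows "\<gamma>1 s = \<gamma>2 s"
proof (rule local_homeo_lifts_eq[OF assms(1,2), where T = "top_of_set (J1 \<inter> J2)"])
  show "connected_space (top_of_set (J1 \<inter> J2))"
    using assms(3,4) by (simp add: vertical_lift_def is_interval_Int)
  have "continuous_map (top_of_set J1) X \<gamma>1" "continuous_map (top_of_set J2) X \<gamma>2"
    using assms(3,4) by (simp_all add: vertical_lift_def)
  then show "continuous_map (top_of_set (J1 \<inter> J2)) X \<gamma>1"
    and "continuous_map (top_of_set (J1 \<inter> J2)) X \<gamma>2"
    using continuous_map_from_subtopology_mono Int_lower1 Int_lower2 by metis+
  show "D (\<gamma>1 s) = D (\<gamma>2 s)" if "s \<in> topspace (top_of_set (J1 \<inter> J2))" for s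
    using assms(3,4) that by (simp add: vertical_lift_def)
qed (use assms(5-7) in simp_all)

lemma vertical_lift_Union:
  assumes lifts: "\<forall>(J, \<gamma>)\<in>\<F>. vertical_lift X D x J \<gamma>"
    and agree: "\<forall>(J1, \<gamma>1)\<in>\<F>. \<forall>(J2, \<gamma>2)\<in>\<F>. \<forall>s\<in>J1 \<inter> J2. \<gamma>1 s = \<gamma>2 s"
    and common: "\<Inter> (fst ` \<F>) \<noteq> {}"
  obtains \<Gamma> where "vertical_lift X D x (\<Union> (fst ` \<F>)) \<Gamma>"
    and "\<And>J \<gamma> s. (J, \<gamma>) \<in> \<F> \<Longrightarrow> s \<in> J \<Longrightarrow> \<Gamma> s = \<gamma> s"
proof -
  let ?L = "\<Union> (fst ` \<F>)"
  have lift: "vertical_lift X D x (fst i) (snd i)" if "i \<in> \<F>" for i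
    using bspec[OF lifts that] by (simp add: case_prod_beta)
  have cover: "topspace (top_of_set ?L) \<subseteq> (\<Union>i\<in>\<F>. fst i)" by simp
  have ope: "openin (top_of_set ?L) (fst i)" if "i \<in> \<F>" for i
    using lift[OF that] that by (intro open_subset) (auto simp: vertical_lift_def)
  have cont: "continuous_map (subtopology (top_of_set ?L) (fst i)) X (snd i)" if "i \<in> \<F>" for i
  proof -
    have "?L \<inter> fst i = fst i" using that by blast
    then have "subtopology (top_of_set ?L) (fst i) = top_of_set (fst i)"
      by (simp add: subtopology_subtopology)
    then show ?thesis using lift[OF that] by (simp add: vertical_lift_def)
  qed
  have agree': "snd i s = snd j s"
    if "i \<in> \<F>" "j \<in> \<F>" "s \<in> topspace (top_of_set ?L) \<inter> fst i \<inter> fst j" for i j s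
  proof -
    have "\<forall>j\<in>\<F>. \<forall>s\<in>fst i \<inter> fst j. snd i s = snd j s"
      using bspec[OF agree that(1)] by (simp add: case_prod_beta)
    then show ?thesis using that(2,3) by (simp add: case_prod_beta)
  qed
  obtain \<Gamma> where cont\<Gamma>: "continuous_map (top_of_set ?L) X \<Gamma>"
    and eq: "\<And>s i. i \<in> \<F> \<Longrightarrow> s \<in> topspace (top_of_set ?L) \<inter> fst i \<Longrightarrow> \<Gamma> s = snd i s"
    using pasting_lemma_exists[OF cover ope cont agree'] by metis
  have "connected ?L"
  proof (rule connected_Union)
    fix J assume "J \<in> fst ` \<F>"
    then obtain i where "i \<in> \<F>" "J = fst i" by blast
    then show "connected J" using lift by (simp add: vertical_lift_def is_interval_connected_1)
  qed (fact common)
  moreover have "open ?L" using lift by (auto simp: vertical_lift_def)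
  moreover have "D (\<Gamma> s) = (x, s)" if "s \<in> ?L" for s
  proof -
    from that obtain i where i: "i \<in> \<F>" "s \<in> fst i" by blast
    then have "\<Gamma> s = snd i s" using eq that by simp
    then show ?thesis using lift[OF i(1)] i(2) by (simp add: vertical_lift_def)
  qed
  ultimately have "vertical_lift X D x ?L \<Gamma>"
    using cont\<Gamma> by (simp add: vertical_lift_def is_interval_connected_1)
  moreover have "\<Gamma> s = \<gamma> s" if "(J, \<gamma>) \<in> \<F>" "s \<in> J" for J \<gamma> s
    using eq[of "(J, \<gamma>)" s] that by force
  ultimately show ?thesis using that by blast
qed

lemma vertical_lift_local:
  fixes D :: "'m \<Rightarrow> 'a::euclidean_space \<times> real"
  assumes "local_homeo X ein_top D" "m \<in> topspace X" "D m = (x, c)"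
  obtains V e \<eta> where "openin X V" "m \<in> V" "inj_on D V" "e > 0"
    "vertical_lift X D x {c-e<..<c+e} \<eta>" "\<eta> c = m" "\<eta> ` {c-e<..<c+e} \<subseteq> V"
proof -
  obtain V g where V: "openin X V" "m \<in> V" "V \<subseteq> topspace X" "openin ein_top (D ` V)"
    "homeomorphic_maps (subtopology X V) (subtopology ein_top (D ` V)) D g"
    by (rule local_homeo_refine[OF assms(1) openin_topspace assms(2)])
  have DV: "D ` V \<subseteq> ein_set" using openin_subset[OF V(4)] by simp
  obtain T where T: "open T" "D ` V = T \<inter> ein_set"
    using V(4) unfolding ein_top_def openin_subtopology by auto
  have "(x, c) \<in> D ` V" using assms(3) V(2) by force
  then have xc: "(x, c) \<in> T" "norm x = 1" using T(2) by (auto simp: ein_set_def)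
  obtain e where e: "e > 0" "ball (x, c) e \<subseteq> T" using T(1) xc(1) open_contains_ball by blast
  let ?I = "{c-e<..<c+e}"
  have line: "(x, s) \<in> D ` V" if "s \<in> ?I" for s
  proof -
    have "dist (x, c) (x, s) = dist c s" by (simp add: dist_Pair_Pair)
    also have "\<dots> < e" using that by (auto simp: dist_real_def)
    finally have "(x, s) \<in> T" using e(2) by auto
    then show ?thesis using T(2) xc(2) by (simp add: ein_set_def)
  qed
  have g_cont: "continuous_map (subtopology ein_top (D ` V)) (subtopology X V) g"
    and g_D: "\<forall>y\<in>topspace (subtopology X V). g (D y) = y"
    and D_g: "\<forall>z\<in>topspace (subtopology ein_top (D ` V)). D (g z) = z"
    using V(5) unfolding homeomorphic_maps_def by blast+
  have g_D': "g (D y) = y" if "y \<in> V" for y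
    using g_D V(3) that by (simp add: subset_iff)
  have D_g': "D (g z) = z" if "z \<in> D ` V" for z
    using D_g DV that by auto
  define \<eta> where "\<eta> = (\<lambda>s. g (x, s))"
  have "continuous_map (top_of_set ?I) (subtopology ein_top (D ` V)) (\<lambda>s. (x, s))"
    using continuous_map_vertical_line[OF xc(2)] line by (auto simp: continuous_map_in_subtopology)
  then have "continuous_map (top_of_set ?I) (subtopology X V) \<eta>"
    unfolding \<eta>_def using continuous_map_compose[OF _ g_cont] by (simp add: o_def)
  then have cont: "continuous_map (top_of_set ?I) X \<eta>" and \<eta>V: "\<eta> ` ?I \<subseteq> V"
    by (auto simp: continuous_map_in_subtopology)
  have lift: "vertical_lift X D x ?I \<eta>"
    unfolding vertical_lift_def using cont line D_g' by (simp add: \<eta>_def is_interval_oo)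
  have inj: "inj_on D V" by (rule inj_onI) (metis g_D')
  have "\<eta> c = m" using g_D' V(2) assms(3) unfolding \<eta>_def by metis
  then show ?thesis by (rule that[OF V(1,2) inj e(1) lift _ \<eta>V])
qed

lemma maximal_vertical_lift_exists:
  fixes D :: "'m \<Rightarrow> 'a::euclidean_space \<times> real"
  assumes lh: "local_homeo X ein_top D" and H: "Hausdorff_space X"
    and p: "p \<in> topspace X" "D p = (x, t)"
  obtains L \<Gamma> where "maximal_vertical_lift X D x L \<Gamma>" "t \<in> L" "\<Gamma> t = p"
proof -
  define \<F> where "\<F> = {(J, \<gamma>). vertical_lift X D x J \<gamma> \<and> t \<in> J \<and> \<gamma> t = p}"
  let ?L = "\<Union> (fst ` \<F>)"
  have lifts: "\<forall>(J, \<gamma>)\<in>\<F>. vertical_lift X D x J \<gamma>" by (simp add: \<F>_def)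
  have "\<gamma>1 s = \<gamma>2 s" if "(J1, \<gamma>1) \<in> \<F>" "(J2, \<gamma>2) \<in> \<F>" "s \<in> J1 \<inter> J2"
    for J1 \<gamma>1 J2 \<gamma>2 s
    using that vertical_lifts_eq[OF lh H, of x J1 \<gamma>1 J2 \<gamma>2 t s] by (simp add: \<F>_def)
  then have agree: "\<forall>(J1, \<gamma>1)\<in>\<F>. \<forall>(J2, \<gamma>2)\<in>\<F>. \<forall>s\<in>J1 \<inter> J2. \<gamma>1 s = \<gamma>2 s"
    by blast
  have common: "\<Inter> (fst ` \<F>) \<noteq> {}" by (auto simp: \<F>_def)
  obtain \<Gamma> where lift: "vertical_lift X D x ?L \<Gamma>"
    and \<Gamma>: "\<And>J \<gamma> s. (J, \<gamma>) \<in> \<F> \<Longrightarrow> s \<in> J \<Longrightarrow> \<Gamma> s = \<gamma> s"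
    using vertical_lift_Union[OF lifts agree common] by metis
  obtain V e \<eta> where "e > 0" "vertical_lift X D x {t-e<..<t+e} \<eta>" "\<eta> t = p"
    by (rule vertical_lift_local[OF lh p])
  then have "({t-e<..<t+e}, \<eta>) \<in> \<F>" and "t \<in> {t-e<..<t+e}" by (simp_all add: \<F>_def)
  then have tL: "t \<in> ?L" and \<Gamma>t: "\<Gamma> t = p"
    using \<Gamma> \<open>\<eta> t = p\<close> by force+
  have "J \<subseteq> ?L" if J: "vertical_lift X D x J \<gamma>" "s0 \<in> J \<inter> ?L" "\<gamma> s0 = \<Gamma> s0" for J \<gamma> s0
  proof -
    let ?\<G> = "{(?L, \<Gamma>), (J, \<gamma>)}"
    have s0: "s0 \<in> ?L \<inter> J" "\<Gamma> s0 = \<gamma> s0" using J(2,3) by auto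
    have "\<forall>s\<in>?L \<inter> J. \<Gamma> s = \<gamma> s" using vertical_lifts_eq[OF lh H lift J(1) s0] by blast
    then have agree2: "\<forall>(J1, \<gamma>1)\<in>?\<G>. \<forall>(J2, \<gamma>2)\<in>?\<G>. \<forall>s\<in>J1 \<inter> J2. \<gamma>1 s = \<gamma>2 s"
      by auto
    have lifts2: "\<forall>(J, \<gamma>)\<in>?\<G>. vertical_lift X D x J \<gamma>" using lift J(1) by simp
    have common2: "\<Inter> (fst ` ?\<G>) \<noteq> {}" using J(2) by auto
    obtain g where g: "vertical_lift X D x (\<Union> (fst ` ?\<G>)) g"
      and g_eq: "\<And>J' \<gamma>' s. (J', \<gamma>') \<in> ?\<G> \<Longrightarrow> s \<in> J' \<Longrightarrow> g s = \<gamma>' s"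
      using vertical_lift_Union[OF lifts2 agree2 common2] by metis
    have "\<Union> (fst ` ?\<G>) = ?L \<union> J" by simp
    moreover have "g t = p" using g_eq[of ?L \<Gamma> t] tL \<Gamma>t by simp
    ultimately have "(?L \<union> J, g) \<in> \<F>" using g tL by (simp add: \<F>_def)
    then have "fst (?L \<union> J, g) \<in> fst ` \<F>" by (rule imageI)
    then show ?thesis by auto
  qed
  then have "maximal_vertical_lift X D x ?L \<Gamma>"
    using lift unfolding maximal_vertical_lift_def by blast
  from that[OF this tL \<Gamma>t] show ?thesis .
qed

lemma maximal_vertical_liftD:
  assumes "maximal_vertical_lift X D x L \<Gamma>" "vertical_lift X D x J \<gamma>" "s \<in> J" "s \<in> L"
    and "\<gamma> s = \<Gamma> s"
  shows "J \<subseteq> L"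
  using assms unfolding maximal_vertical_lift_def by blast

lemma maximal_vertical_lift_limitin:
  fixes D :: "'m \<Rightarrow> 'a::euclidean_space \<times> real"
  assumes lh: "local_homeo X ein_top D" and max: "maximal_vertical_lift X D x L \<Gamma>"
    and F: "F \<noteq> bot" "eventually (\<lambda>s. s \<in> L) F" and lim: "limitin X \<Gamma> m F"
  shows "\<exists>b\<in>L. ((\<lambda>s. s) \<longlongrightarrow> b) F"
proof -
  have lift: "vertical_lift X D x L \<Gamma>" using max by (simp add: maximal_vertical_lift_def)
  have "limitin ein_top (D \<circ> \<Gamma>) (D m) F"
    by (rule continuous_map_limit[OF local_homeo_imp_continuous_map[OF lh] lim])
  then have "((\<lambda>s. D (\<Gamma> s)) \<longlongrightarrow> D m) F"
    by (simp add: ein_top_def limitin_subtopology o_def)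
  moreover have "eventually (\<lambda>s. D (\<Gamma> s) = (x, s)) F"
    using F(2) by eventually_elim (use lift in \<open>simp add: vertical_lift_def\<close>)
  ultimately have "((\<lambda>s. (x, s)) \<longlongrightarrow> D m) F" by (rule Lim_transform_eventually)
  then have "((\<lambda>s. x) \<longlongrightarrow> fst (D m)) F" and b: "((\<lambda>s. s) \<longlongrightarrow> snd (D m)) F"
    by (auto dest: tendsto_fst tendsto_snd)
  then have Dm: "D m = (x, snd (D m))" using tendsto_const_iff[OF F(1)] by (metis prod.collapse)
  have mX: "m \<in> topspace X" using lim by (rule limitin_topspace)
  obtain V e \<eta> where V: "openin X V" "m \<in> V" "inj_on D V" "e > 0"
    and \<eta>: "vertical_lift X D x {snd (D m) - e<..<snd (D m) + e} \<eta>"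
      "\<eta> (snd (D m)) = m" "\<eta> ` {snd (D m) - e<..<snd (D m) + e} \<subseteq> V"
    by (rule vertical_lift_local[OF lh mX Dm])
  let ?I = "{snd (D m) - e<..<snd (D m) + e}"
  have "eventually (\<lambda>s. \<Gamma> s \<in> V) F" using lim V(1,2) by (simp add: limitin_def)
  moreover have "eventually (\<lambda>s. dist s (snd (D m)) < e) F" using tendstoD[OF b V(4)] .
  ultimately have "eventually (\<lambda>s. \<Gamma> s \<in> V \<and> s \<in> ?I \<and> s \<in> L) F"
    using F(2) by eventually_elim (auto simp: dist_real_def)
  then obtain s where s: "\<Gamma> s \<in> V" "s \<in> ?I" "s \<in> L"
    using eventually_happens'[OF F(1)] by blast
  have "D (\<eta> s) = D (\<Gamma> s)" using lift \<eta>(1) s(2,3) by (simp add: vertical_lift_def)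
  moreover have "\<eta> s \<in> V" using \<eta>(3) s(2) by blast
  ultimately have "\<eta> s = \<Gamma> s" using inj_onD[OF V(3)] s(1) by blast
  then have "?I \<subseteq> L" by (rule maximal_vertical_liftD[OF max \<eta>(1) s(2,3)])
  moreover have "snd (D m) \<in> ?I" using V(4) by simp
  ultimately show ?thesis using b by blast
qed

lemma maximal_vertical_lift_inextendible:
  fixes D :: "'m \<Rightarrow> 'a::euclidean_space \<times> real"
  assumes lh: "local_homeo X ein_top D" and max: "maximal_vertical_lift X D x L \<Gamma>"
    and "t \<in> L"
  shows "inextendible X \<Gamma> L"
proof -
  have L: "open L" "is_interval L"
    using max by (simp_all add: maximal_vertical_lift_def vertical_lift_def)
  note upper = upper_end_open_interval[OF L assms(3)]
  note lower = lower_end_open_interval[OF L assms(3)]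
  have "\<not> limitin X \<Gamma> m (upper_end L)" "\<not> limitin X \<Gamma> m (lower_end L)" for m
    using maximal_vertical_lift_limitin[OF lh max upper(1,2)] upper(3)
      maximal_vertical_lift_limitin[OF lh max lower(1,2)] lower(3) by blast+
  then show ?thesis unfolding inextendible_def by blast
qed

lemma vertical_lift_timelike:
  assumes "vertical_lift X D x L \<Gamma>" "t \<in> L" "norm x = 1"
  shows "timelike_curve X D \<Gamma> L"
proof -
  have "param_interval L"
    using assms(1,2) param_interval_open by (auto simp: vertical_lift_def)
  then have "future_timelike_curve X D \<Gamma> L"
    using assms(1) sdist_self[OF assms(3)] by (simp add: future_timelike_curve_def vertical_lift_def)
  then show ?thesis by (simp add: timelike_curve_def)
qed

lemma vertical_lift_meets_cauchy_hypersurface: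
  fixes D :: "'m \<Rightarrow> 'a::euclidean_space \<times> real"
  assumes lh: "local_homeo X ein_top D" and H: "Hausdorff_space X"
    and S: "cauchy_hypersurface X D S" and p: "p \<in> topspace X" "D p = (x, t)"
  obtains L \<Gamma> s where "vertical_lift X D x L \<Gamma>" "t \<in> L" "\<Gamma> t = p" "s \<in> L" "\<Gamma> s \<in> S"
proof -
  have "D p \<in> ein_set"
    using continuous_map_image_subset_topspace[OF local_homeo_imp_continuous_map[OF lh]] p(1)
    by auto
  then have x: "norm x = 1" using p(2) by (simp add: ein_set_def)
  obtain L \<Gamma> where max: "maximal_vertical_lift X D x L \<Gamma>" and t: "t \<in> L" "\<Gamma> t = p"
    by (rule maximal_vertical_lift_exists[OF lh H p])
  then have lift: "vertical_lift X D x L \<Gamma>" by (simp add: maximal_vertical_lift_def)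
  have "timelike_curve X D \<Gamma> L" by (rule vertical_lift_timelike[OF lift t(1) x])
  moreover have "inextendible X \<Gamma> L" by (rule maximal_vertical_lift_inextendible[OF lh max t(1)])
  ultimately have "\<exists>!s. s \<in> L \<and> \<Gamma> s \<in> S"
    using S unfolding cauchy_hypersurface_def by blast
  then obtain s where "s \<in> L" "\<Gamma> s \<in> S" by blast
  from that[OF lift t this] show ?thesis .
qed

theorem lemma4p1:
  fixes X :: "'m topology" and D :: "'m \<Rightarrow> 'a::euclidean_space \<times> real"
    and U S :: "'m set"
  assumes "DIM('a) \<ge> 3"
    and "developed_spacetime X D"
    and "globally_hyperbolic X D"
    and "openin X U"
    and "causally_convex X D U"
    and "cauchy_hypersurface (subtopology X U) D S"
    and "ein_achronal (D ` S)"
    and "inj_on D S"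
  shows "inj_on D U"
proof (rule inj_onI)
  fix p q assume pq: "p \<in> U" "q \<in> U" "D p = D q"
  let ?Y = "subtopology X U"
  have lh: "local_homeo ?Y ein_top D" and H: "Hausdorff_space ?Y"
    using assms(2,4) local_homeo_subtopology Hausdorff_space_subtopology
    by (auto simp: developed_spacetime_def)
  have p: "p \<in> topspace ?Y" and q: "q \<in> topspace ?Y"
    using pq(1,2) openin_subset[OF assms(4)] by auto
  obtain x t where Dp: "D p = (x, t)" by fastforce
  with pq(3) have Dq: "D q = (x, t)" by simp
  obtain Lp \<Gamma>p sp where \<Gamma>p: "vertical_lift ?Y D x Lp \<Gamma>p" "t \<in> Lp" "\<Gamma>p t = p"
    and sp: "sp \<in> Lp" "\<Gamma>p sp \<in> S"
    by (rule vertical_lift_meets_cauchy_hypersurface[OF lh H assms(6) p Dp])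
  obtain Lq \<Gamma>q sq where \<Gamma>q: "vertical_lift ?Y D x Lq \<Gamma>q" "t \<in> Lq" "\<Gamma>q t = q"
    and sq: "sq \<in> Lq" "\<Gamma>q sq \<in> S"
    by (rule vertical_lift_meets_cauchy_hypersurface[OF lh H assms(6) q Dq])
  have D\<Sigma>: "D (\<Gamma>p sp) = (x, sp)" "D (\<Gamma>q sq) = (x, sq)"
    using \<Gamma>p(1) \<Gamma>q(1) sp(1) sq(1) by (simp_all add: vertical_lift_def)
  then have "sp = sq"
    using ein_achronal_vertical_unique[OF assms(7)] sp(2) sq(2) by (metis image_eqI)
  moreover from this have "\<Gamma>p sp = \<Gamma>q sq" using inj_onD[OF assms(8)] D\<Sigma> sp(2) sq(2) by simp
  ultimately show "p = q"
    using vertical_lifts_eq[OF lh H \<Gamma>p(1) \<Gamma>q(1), of sp t] \<Gamma>p(2,3) \<Gamma>q(2,3) sp(1) sq(1) by simp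
qed

end
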